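(* Let $i,j,n,r\ge0$ be integers and put $$R_1(\varepsilon)=\frac{(rn)!}{n!^r}\binom{rn+i+\varepsilon}{(r-1)n+j},$$ $$R_2(\varepsilon)=\frac{(rn)!}{n!^r}\frac{(1-\varepsilon)_{rn}}{(rn)!}\frac{(rn+j+1)!}{(1-\varepsilon)_{rn+j+1}}\binom{rn-\varepsilon+j-i}{j-i}\binom{(r+1)n-\varepsilon+1}{rn+i+1}.$$ Then for every integer $H\ge0$: if $0\le i,j\le n$, the number $d_n^H\frac1{H!}\frac{\partial^H}{\partial\varepsilon^H}R_1(\varepsilon)\big|_{\varepsilon=0}$ is an integer; and if $0\le i\le j\le n$, the number $d_n^H\frac1{H!}\frac{\partial^H}{\partial\varepsilon^H}R_2(\varepsilon)\big|_{\varepsilon=0}$ is an integer.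
   Context: $(x)_m=x(x+1)\cdots(x+m-1)$, $(x)_0=1$; for complex $x$ and integer $m$, $\binom xm=x(x-1)\cdots(x-m+1)/m!$ if $m\ge0$ and $\binom xm=0$ if $m<0$. $d_n=\operatorname{lcm}(1,\dots,n)$, $d_0=1$. *)

theory Defs
  imports "HOL-Analysis.Analysis"
begin

definition ibinom :: "real \<Rightarrow> int \<Rightarrow> real" where
  "ibinom x m = (if m < 0 then 0 else x gchoose (nat m))"

text \<open>d_n = lcm(1,...,n), d_0 = 1.\<close>
definition dlcm :: "nat \<Rightarrow> nat" where
  "dlcm n = Lcm {1..n}"

definition R1 :: "nat \<Rightarrow> nat \<Rightarrow> nat \<Rightarrow> nat \<Rightarrow> real \<Rightarrow> real" where
  "R1 i j n r \<epsilon> =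
     fact (r*n) / (fact n) ^ r
     * ibinom (real (r*n + i) + \<epsilon>) ((int r - 1) * int n + int j)"

definition R2 :: "nat \<Rightarrow> nat \<Rightarrow> nat \<Rightarrow> nat \<Rightarrow> real \<Rightarrow> real" where
  "R2 i j n r \<epsilon> =
     fact (r*n) / (fact n) ^ r
     * (pochhammer (1 - \<epsilon>) (r*n) / fact (r*n))
     * (fact (r*n + j + 1) / pochhammer (1 - \<epsilon>) (r*n + j + 1))
     * ibinom (real (r*n) - \<epsilon> + real_of_int (int j - int i)) (int j - int i)
     * ibinom (real ((r+1)*n) - \<epsilon> + 1) (int (r*n + i + 1))"

end

(*
  Near eps = 0 both functions are, up to a rational constant K, products of linear factors
  l + c*eps (c = 1 or c = -1) over a finite set L of positive integers; for R2 with r = 0 and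
  j < n there are in addition geometric factors g/(g - eps) with g <= n.  Multiplied by d^H,
  the H-th Taylor coefficient of such a product is a sum of products in which every factor
  contributes either l or c*d, both multiples of gcd l d.  Hence it lies in
  K * prod (gcd l d) * Z, and it remains to show that K * prod (gcd l d_n) is an integer.
  This is checked one prime at a time with Legendre's formula: for every prime power q <= n
  the multiples of q in L make up for the floor quotients by q of the factorials in K, and
  for q > n the floor quotients balance on their own.
*)

theory Submission
  imports Defs "HOL-Complex_Analysis.Laurent_Convergence"
begin

unbundle no vec_syntax
notation fps_nth (infixl \<open>$\<close> 75)

section \<open>Power series expansions\<close>

lemma taylor_coeff_eq_fps_nth:
  fixes f :: "'a::{banach,real_normed_field} \<Rightarrow> 'a"
  assumes "f has_fps_expansion F"
  shows "(deriv ^^ n) f 0 / fact n = F $ n"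
proof -
  have "(deriv ^^ n) f has_fps_expansion (fps_deriv ^^ n) F"
    using assms by (induction n) (auto intro: has_fps_expansion_deriv)
  hence "(deriv ^^ n) f 0 = (fps_deriv ^^ n) F $ 0"
    by (auto simp: has_fps_expansion_def eval_fps_at_0 dest: eventually_nhds_x_imp_x)
  thus ?thesis by (simp add: fps_0th_higher_deriv)
qed

lemma has_fps_expansion_geometric:
  fixes c :: "'a::{banach,real_normed_field}"
  shows "(\<lambda>x. inverse (1 - x / c)) has_fps_expansion Abs_fps (\<lambda>k. inverse c ^ k)"
proof -
  have "(\<lambda>x. inverse (1 - inverse c * x))
      has_fps_expansion inverse (1 - fps_const (inverse c) * fps_X)"
    by (intro fps_expansion_intros) auto
  also have "inverse (1 - fps_const (inverse c) * fps_X) = Abs_fps (\<lambda>k. inverse c ^ k)"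
  proof (rule fps_inverse_unique, rule fps_ext)
    fix k
    show "((1 - fps_const (inverse c) * fps_X) * Abs_fps (\<lambda>k. inverse c ^ k)) $ k
        = (1 :: 'a fps) $ k"
      by (cases k) (auto simp: algebra_simps)
  qed
  finally show ?thesis by (simp add: divide_inverse_commute)
qed

lemma has_fps_expansion_linear_prod:
  fixes K c :: real and L :: "nat set"
  shows "(\<lambda>x. K * (\<Prod>l\<in>L. real l + c * x)) has_fps_expansion
           fps_const K * (\<Prod>l\<in>L. fps_const (real l) + fps_const c * fps_X)"
  by (intro fps_expansion_intros)

lemma eventually_nhds_0_less_1: "eventually (\<lambda>x::real. x < 1) (nhds 0)"
  using eventually_nhds_in_open[of "{..<1::real}" 0] by simp

section \<open>Power series with integral rescaled coefficients\<close>

definition scaled_integral :: "nat \<Rightarrow> real fps \<Rightarrow> bool" where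
  "scaled_integral d F \<longleftrightarrow> (\<forall>H. real d ^ H * F $ H \<in> \<int>)"

lemma scaled_integral_const: "c \<in> \<int> \<Longrightarrow> scaled_integral d (fps_const c)"
  by (simp add: scaled_integral_def)

lemma scaled_integral_add:
  assumes "scaled_integral d F" "scaled_integral d G"
  shows "scaled_integral d (F + G)"
  using assms unfolding scaled_integral_def by (simp add: distrib_left Ints_add)

lemma scaled_integral_mult:
  assumes "scaled_integral d F" "scaled_integral d G"
  shows "scaled_integral d (F * G)"
  unfolding scaled_integral_def
proof
  fix H
  have "real d ^ H * (F * G) $ H
      = (\<Sum>k=0..H. (real d ^ k * F $ k) * (real d ^ (H - k) * G $ (H - k)))"
    unfolding fps_mult_nth sum_distrib_left
  proof (rule sum.cong)
    fix k assume "k \<in> {0..H}"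
    hence "real d ^ H = real d ^ k * real d ^ (H - k)" by (simp flip: power_add)
    thus "real d ^ H * (F $ k * G $ (H - k))
        = real d ^ k * F $ k * (real d ^ (H - k) * G $ (H - k))"
      by simp
  qed simp
  also have "\<dots> \<in> \<int>"
    using assms unfolding scaled_integral_def by (intro Ints_sum) (simp add: Ints_mult)
  finally show "real d ^ H * (F * G) $ H \<in> \<int>" .
qed

lemma scaled_integral_prod:
  assumes "\<And>x. x \<in> A \<Longrightarrow> scaled_integral d (f x)"
  shows "scaled_integral d (\<Prod>x\<in>A. f x)"
  using assms
proof (induction A rule: infinite_finite_induct)
  case (insert x A)
  thus ?case by (simp add: scaled_integral_mult)
qed (use scaled_integral_const[of 1 d] in simp_all)

lemma scaled_integral_X_mult:
  assumes "scaled_integral d (fps_const (real d) * F)"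
  shows "scaled_integral d (fps_X * F)"
  unfolding scaled_integral_def
proof
  fix H
  show "real d ^ H * (fps_X * F) $ H \<in> \<int>"
  proof (cases H)
    case (Suc k)
    have "real d ^ H * (fps_X * F) $ H = real d ^ k * (fps_const (real d) * F) $ k"
      using Suc by simp
    thus ?thesis using assms by (simp add: scaled_integral_def)
  qed simp
qed

lemma scaled_integral_geometric:
  assumes "g dvd d"
  shows "scaled_integral d (Abs_fps (\<lambda>k. inverse (real g) ^ k))"
  unfolding scaled_integral_def
proof
  fix H
  have "real d / real g \<in> \<int>"
    using assms by (cases "g = 0") (auto elim!: dvdE)
  hence "(real d / real g) ^ H \<in> \<int>" by (rule Ints_power)
  thus "real d ^ H * Abs_fps (\<lambda>k. inverse (real g) ^ k) $ H \<in> \<int>"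
    by (simp add: divide_inverse power_mult_distrib)
qed

lemma scaled_integral_linear_prod:
  fixes K c :: real and L :: "nat set"
  assumes "finite L" "c \<in> \<int>" "K * (\<Prod>l\<in>L. real (gcd l d)) \<in> \<int>"
  shows "scaled_integral d (fps_const K * (\<Prod>l\<in>L. fps_const (real l) + fps_const c * fps_X))"
  using assms(1,3)
proof (induction L arbitrary: K rule: finite_induct)
  case empty
  thus ?case by (simp add: scaled_integral_const)
next
  case (insert a L K)
  define G where "G = (\<Prod>l\<in>L. real (gcd l d))"
  define P where "P = (\<Prod>l\<in>L. fps_const (real l) + fps_const c * fps_X)"
  have KG: "K * real (gcd a d) * G \<in> \<int>"
    using insert.prems insert.hyps by (simp add: G_def mult.assoc)
  have "scaled_integral d (fps_const (K * real a) * P)"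
  proof -
    have "K * real a * G = (K * real (gcd a d) * G) * real (a div gcd a d)"
      by (simp flip: of_nat_mult)
    also have "\<dots> \<in> \<int>" using KG by simp
    finally show ?thesis unfolding P_def G_def by (rule insert.IH)
  qed
  moreover have "scaled_integral d (fps_const (K * c * real d) * P)"
  proof -
    have "K * c * real d * G = (K * real (gcd a d) * G) * c * real (d div gcd a d)"
      by (simp flip: of_nat_mult)
    also have "\<dots> \<in> \<int>" using KG assms(2) by simp
    finally show ?thesis unfolding P_def G_def by (rule insert.IH)
  qed
  hence "scaled_integral d (fps_X * (fps_const (K * c) * P))"
    by (intro scaled_integral_X_mult) (simp add: mult_ac)
  ultimately have "scaled_integral d (fps_const (K * real a) * P + fps_X * (fps_const (K * c) * P))"
    by (rule scaled_integral_add)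
  moreover have "fps_const K * (\<Prod>l\<in>insert a L. fps_const (real l) + fps_const c * fps_X)
      = fps_const (K * real a) * P + fps_X * (fps_const (K * c) * P)"
    using insert.hyps by (simp add: P_def algebra_simps flip: fps_const_mult)
  ultimately show ?case by simp
qed

lemma scaled_integral_taylor_coeff:
  assumes "f has_fps_expansion F" "scaled_integral d F"
  shows "real d ^ H * ((deriv ^^ H) f 0 / fact H) \<in> \<int>"
  using assms by (simp add: taylor_coeff_eq_fps_nth scaled_integral_def)

section \<open>Factorial quotients and Legendre's formula\<close>

lemma card_multiples_Ioc:
  fixes q :: nat
  assumes "q > 0"
  shows "card {l \<in> {a<..b}. q dvd l} = b div q - a div q"
proof -
  have iff: "q * t \<in> {a<..b} \<longleftrightarrow> t \<in> {a div q<..b div q}" for t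
    using assms by (simp add: div_less_iff_less_mult less_eq_div_iff_mult_less_eq ac_simps)
  have "{l \<in> {a<..b}. q dvd l} = (\<lambda>t. q * t) ` {a div q<..b div q}"
    unfolding dvd_def using iff by blast
  thus ?thesis by (simp add: card_image inj_on_def assms)
qed

lemma sum_card_filter_swap:
  assumes "finite A" "finite B"
  shows "(\<Sum>a\<in>A. card {b \<in> B. P a b}) = (\<Sum>b\<in>B. card {a \<in> A. P a b})"
proof -
  have count: "card {y \<in> Y. Q y} = (\<Sum>y\<in>Y. of_bool (Q y))" if "finite Y" for Y and Q :: "'c \<Rightarrow> bool"
    using that by (simp add: sum_of_bool_eq Collect_conj_eq Int_commute)
  show ?thesis
    unfolding count[OF assms(1)] count[OF assms(2)] by (rule sum.swap)
qed

lemma multiplicity_less_self: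
  fixes p m :: nat
  assumes "prime p" "m > 0"
  shows "multiplicity p m < m"
proof (rule multiplicity_lessI)
  have "m < 2 ^ m" by (rule less_exp)
  also have "\<dots> \<le> p ^ m" using assms(1) by (simp add: power_mono prime_ge_2_nat)
  finally show "\<not> p ^ m dvd m" using assms(2) by (auto dest: dvd_imp_le)
  show "m \<noteq> 0" "\<not> is_unit p" using assms by (auto simp: not_prime_unit)
qed

lemma multiplicity_eq_card_prime_power_dvd:
  fixes p m T :: nat
  assumes "prime p" "m > 0" "multiplicity p m \<le> T"
  shows "multiplicity p m = card {k \<in> {1..T}. p ^ k dvd m}"
proof -
  have "\<not> is_unit p" "m \<noteq> 0" using assms by (auto simp: not_prime_unit)
  hence "{k \<in> {1..T}. p ^ k dvd m} = {1..multiplicity p m}"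
    using assms(3) by (auto simp: power_dvd_iff_le_multiplicity)
  thus ?thesis by simp
qed

lemma multiplicity_fact:
  fixes p x T :: nat
  assumes p: "prime p" and "x \<le> T"
  shows "multiplicity p (fact x :: nat) = (\<Sum>k=1..T. x div p ^ k)"
proof -
  have pk: "0 < p ^ k" for k using p by (simp add: prime_gt_0_nat)
  have "{1..x} = {0<..x}" by auto
  hence "multiplicity p (fact x :: nat) = multiplicity p (\<Prod>{0<..x})"
    by (simp add: fact_prod)
  also have "\<dots> = (\<Sum>l\<in>{0<..x}. multiplicity p l)"
    by (rule prime_elem_multiplicity_prod_distrib) (use p in auto)
  also have "\<dots> = (\<Sum>l\<in>{0<..x}. card {k \<in> {1..T}. p ^ k dvd l})"
  proof (rule sum.cong[OF refl])
    fix l assume l: "l \<in> {0<..x}"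
    hence "multiplicity p l \<le> T" using multiplicity_less_self[OF p, of l] assms(2) by simp
    thus "multiplicity p l = card {k \<in> {1..T}. p ^ k dvd l}"
      using l by (intro multiplicity_eq_card_prime_power_dvd p) simp_all
  qed
  also have "\<dots> = (\<Sum>k=1..T. card {l \<in> {0<..x}. p ^ k dvd l})"
    by (rule sum_card_filter_swap) auto
  also have "\<dots> = (\<Sum>k=1..T. x div p ^ k)"
    using p unfolding card_multiples_Ioc[OF pk] by simp
  finally show ?thesis .
qed

lemma multiplicity_prod_mset_fact:
  fixes p T :: nat and Bs :: "nat multiset"
  assumes p: "prime p" and "\<forall>b\<in>#Bs. b \<le> T"
  shows "multiplicity p (\<Prod>b\<in>#Bs. fact b :: nat) = (\<Sum>k=1..T. \<Sum>b\<in>#Bs. b div p ^ k)"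
  using assms(2)
proof (induction Bs)
  case (add b Bs)
  have "multiplicity p (fact b * (\<Prod>b\<in>#Bs. fact b) :: nat)
      = multiplicity p (fact b :: nat) + multiplicity p (\<Prod>b\<in>#Bs. fact b :: nat)"
    by (rule prime_elem_multiplicity_mult_distrib) (use p in \<open>auto simp: prod_mset_zero_iff\<close>)
  thus ?case using add by (simp add: multiplicity_fact[OF p, of b T] sum.distrib)
qed simp

lemma multiplicity_prod_gcd:
  fixes p d T :: nat and L :: "nat set"
  assumes p: "prime p" and "finite L" "0 < d" "d \<le> T"
  shows "multiplicity p (\<Prod>l\<in>L. gcd l d) = (\<Sum>k=1..T. card {l \<in> L. p ^ k dvd gcd l d})"
proof -
  have bound: "multiplicity p (gcd l d) \<le> T" for l
    using multiplicity_less_self[OF p, of "gcd l d"] gcd_le2_nat[of d l] assms(3,4) by fastforce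
  have "multiplicity p (\<Prod>l\<in>L. gcd l d) = (\<Sum>l\<in>L. multiplicity p (gcd l d))"
    by (rule prime_elem_multiplicity_prod_distrib) (use assms in auto)
  also have "\<dots> = (\<Sum>l\<in>L. card {k \<in> {1..T}. p ^ k dvd gcd l d})"
    by (intro sum.cong refl multiplicity_eq_card_prime_power_dvd p bound) (use assms in auto)
  also have "\<dots> = (\<Sum>k=1..T. card {l \<in> L. p ^ k dvd gcd l d})"
    using assms(2) by (rule sum_card_filter_swap) simp
  finally show ?thesis .
qed

(* The floor inequality is only needed for prime powers q. *)
lemma prod_mset_fact_dvd:
  fixes As Bs :: "nat multiset" and L :: "nat set" and d :: nat
  assumes "finite L" "0 < d"
    and floor_sums: "\<And>q. 0 < q \<Longrightarrow>
      (\<Sum>b\<in>#Bs. b div q) \<le> (\<Sum>a\<in>#As. a div q) + card {l \<in> L. q dvd gcd l d}"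
  shows "(\<Prod>b\<in>#Bs. fact b) dvd (\<Prod>a\<in>#As. fact a) * (\<Prod>l\<in>L. gcd l d)"
proof (rule multiplicity_le_imp_dvd)
  show "(\<Prod>b\<in>#Bs. fact b :: nat) \<noteq> 0" by (auto simp: prod_mset_zero_iff)
  fix p :: nat assume p: "prime p"
  define T where "T = sum_mset Bs + sum_mset As + d"
  have bounded: "\<forall>b\<in>#Bs. b \<le> T" "\<forall>a\<in>#As. a \<le> T"
    by (auto simp: T_def dest!: multi_member_split)
  have "multiplicity p (\<Prod>b\<in>#Bs. fact b :: nat) = (\<Sum>k=1..T. \<Sum>b\<in>#Bs. b div p ^ k)"
    using bounded by (intro multiplicity_prod_mset_fact p) simp
  also have "\<dots> \<le> (\<Sum>k=1..T. (\<Sum>a\<in>#As. a div p ^ k) + card {l \<in> L. p ^ k dvd gcd l d})"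
    using p by (intro sum_mono floor_sums) (simp add: prime_gt_0_nat)
  also have "\<dots> = (\<Sum>k=1..T. \<Sum>a\<in>#As. a div p ^ k) + (\<Sum>k=1..T. card {l \<in> L. p ^ k dvd gcd l d})"
    by (rule sum.distrib)
  also have "\<dots> = multiplicity p (\<Prod>a\<in>#As. fact a :: nat) + multiplicity p (\<Prod>l\<in>L. gcd l d)"
    using assms(1,2) by (simp only: multiplicity_prod_mset_fact[OF p bounded(2)]
        multiplicity_prod_gcd[OF p, of L d T] T_def le_add2)
  also have "\<dots> = multiplicity p ((\<Prod>a\<in>#As. fact a) * (\<Prod>l\<in>L. gcd l d))"
    by (rule prime_elem_multiplicity_mult_distrib[symmetric])
      (use p assms in \<open>auto simp: prod_mset_zero_iff\<close>)
  finally show "multiplicity p (\<Prod>b\<in>#Bs. fact b :: nat)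
      \<le> multiplicity p ((\<Prod>a\<in>#As. fact a) * (\<Prod>l\<in>L. gcd l d))" .
qed

lemma dlcm_pos: "0 < dlcm n"
  unfolding dlcm_def
  by (metis Lcm_0_iff atLeastAtMost_iff finite_atLeastAtMost gr0I not_one_le_zero)

lemma dvd_dlcm: "0 < q \<Longrightarrow> q \<le> n \<Longrightarrow> q dvd dlcm n"
  unfolding dlcm_def by (rule dvd_Lcm) simp

lemma prod_mset_fact_dvd_dlcm:
  fixes As Bs :: "nat multiset" and L :: "nat set"
  assumes "finite L"
    and small: "\<And>q. 0 < q \<Longrightarrow> q \<le> n \<Longrightarrow>
      (\<Sum>b\<in>#Bs. b div q) \<le> (\<Sum>a\<in>#As. a div q) + card {l \<in> L. q dvd l}"
    and large: "\<And>q. n < q \<Longrightarrow> (\<Sum>b\<in>#Bs. b div q) \<le> (\<Sum>a\<in>#As. a div q)"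
  shows "(\<Prod>b\<in>#Bs. fact b) dvd (\<Prod>a\<in>#As. fact a) * (\<Prod>l\<in>L. gcd l (dlcm n))"
proof (rule prod_mset_fact_dvd[OF assms(1) dlcm_pos])
  fix q :: nat assume "0 < q"
  show "(\<Sum>b\<in>#Bs. b div q) \<le> (\<Sum>a\<in>#As. a div q) + card {l \<in> L. q dvd gcd l (dlcm n)}"
  proof (cases "q \<le> n")
    case True
    thus ?thesis using small[OF \<open>0 < q\<close>] dvd_dlcm[OF \<open>0 < q\<close>] by simp
  next
    case False
    thus ?thesis using large[of q] by (simp add: trans_le_add1)
  qed
qed

lemma div_add_div_le: "a div q + b div q \<le> (a + b) div q" for a b q :: nat
  by (simp add: div_add1_eq[of a b q])

lemma mult_div_le_mult_div: "r * (n div q) \<le> r * n div q" for r n q :: nat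
proof (induction r)
  case (Suc r)
  have "Suc r * (n div q) \<le> n div q + r * n div q" using Suc by simp
  also have "\<dots> \<le> Suc r * n div q" using div_add_div_le[of n q "r * n"] by simp
  finally show ?case .
qed simp

lemma of_nat_div_mult_Ints:
  fixes a b g :: nat
  assumes "b dvd a * g"
  shows "real a / real b * real g \<in> \<int>"
proof -
  obtain c where "a * g = b * c" using assms by (elim dvdE)
  hence "real a / real b * real g = (if b = 0 then 0 else real c)"
    by (auto simp: field_simps simp flip: of_nat_mult)
  thus ?thesis by simp
qed

section \<open>Products over integer intervals\<close>

lemma pochhammer_eq_prod_Ioc:
  fixes x :: "'a::comm_semiring_1"
  shows "pochhammer (of_nat a + 1 + x) k = (\<Prod>l\<in>{a<..a+k}. of_nat l + x)"
proof (induction k)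
  case (Suc k)
  have "{a<..a + Suc k} = insert (a + Suc k) {a<..a+k}" by auto
  thus ?case using Suc by (simp add: pochhammer_Suc algebra_simps)
qed simp

lemma fact_eq_prod_Ioc: "(fact k :: 'a::{comm_semiring_1,semiring_char_0}) = (\<Prod>l\<in>{0<..k}. of_nat l)"
  using pochhammer_eq_prod_Ioc[of 0 0 k] by (simp add: pochhammer_fact)

lemma gbinomial_eq_prod_Ioc:
  fixes x :: "'a::field_char_0"
  assumes "k \<le> a"
  shows "(of_nat a + x) gchoose k = (\<Prod>l\<in>{a-k<..a}. of_nat l + x) / fact k"
proof -
  have "(of_nat a + x) gchoose k = pochhammer (of_nat (a - k) + 1 + x) k / fact k"
    using assms by (simp add: gbinomial_pochhammer' of_nat_diff algebra_simps)
  also have "pochhammer (of_nat (a - k) + 1 + x) k = (\<Prod>l\<in>{a-k<..a}. of_nat l + x)"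
    using assms pochhammer_eq_prod_Ioc[of "a - k" x k] by simp
  finally show ?thesis .
qed

lemma prod_Ioc_split:
  fixes a b c :: nat
  assumes "a \<le> b" "b \<le> c"
  shows "prod f {a<..c} = prod f {a<..b} * prod f {b<..c}"
proof -
  have "{a<..c} = {a<..b} \<union> {b<..c}" using assms by auto
  thus ?thesis by (simp add: prod.union_disjoint ivl_disj_int_two(6))
qed

lemma ibinom_of_nat: "ibinom x (int k) = x gchoose k"
  by (simp add: ibinom_def)

section \<open>Closed forms and expansions of R1 and R2\<close>

lemma R1_eq_prod:
  assumes "i \<le> n" "j \<le> n" "n \<le> r * n + j"
  shows "R1 i j n r = (\<lambda>x. fact (r*n) / (fact n ^ r * fact (r*n+j-n))
           * (\<Prod>l\<in>{n+i-j<..r*n+i}. real l + x))"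
proof
  fix x :: real
  have "(int r - 1) * int n + int j = int (r*n+j-n)"
    using assms(3) by (simp add: of_nat_diff algebra_simps)
  hence "ibinom (real (r*n+i) + x) ((int r - 1) * int n + int j)
      = (real (r*n+i) + x) gchoose (r*n+j-n)"
    by (simp only: ibinom_of_nat)
  also have "\<dots> = (\<Prod>l\<in>{n+i-j<..r*n+i}. real l + x) / fact (r*n+j-n)"
  proof -
    have "r*n+i - (r*n+j-n) = n+i-j" using assms by simp
    thus ?thesis using gbinomial_eq_prod_Ioc[of "r*n+j-n" "r*n+i" x] assms by simp
  qed
  finally show "R1 i j n r x = fact (r*n) / (fact n ^ r * fact (r*n+j-n))
           * (\<Prod>l\<in>{n+i-j<..r*n+i}. real l + x)"
    by (simp add: R1_def)
qed

lemma R1_eq_0: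
  assumes "\<not> n \<le> r * n + j"
  shows "R1 i j n r = (\<lambda>x. 0)"
proof -
  have "r = 0" using assms by (cases r) auto
  thus ?thesis using assms by (simp add: R1_def ibinom_def fun_eq_iff)
qed

lemma R1_coefficient_dvd:
  assumes "i \<le> n" "j \<le> n" "n \<le> r * n + j"
  shows "fact n ^ r * fact (r*n+j-n) dvd fact (r*n) * (\<Prod>l\<in>{n+i-j<..r*n+i}. gcd l (dlcm n))"
proof -
  define m where "m = r*n+j-n"
  have "(\<Prod>b\<in>#replicate_mset r n + {#m#}. fact b) dvd
          (\<Prod>a\<in>#{#r*n#}. fact a) * (\<Prod>l\<in>{n+i-j<..r*n+i}. gcd l (dlcm n))"
  proof (rule prod_mset_fact_dvd_dlcm)
    fix q :: nat assume "0 < q" "q \<le> n"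
    have "n+i-j + m = r*n+i" using assms by (simp add: m_def)
    hence "(n+i-j) div q + m div q \<le> (r*n+i) div q"
      using div_add_div_le[of "n+i-j" q m] by simp
    thus "(\<Sum>b\<in>#replicate_mset r n + {#m#}. b div q)
        \<le> (\<Sum>a\<in>#{#r*n#}. a div q) + card {l \<in> {n+i-j<..r*n+i}. q dvd l}"
      unfolding card_multiples_Ioc[OF \<open>0 < q\<close>] using mult_div_le_mult_div[of r n q] by simp
  next
    fix q :: nat assume "n < q"
    thus "(\<Sum>b\<in>#replicate_mset r n + {#m#}. b div q) \<le> (\<Sum>a\<in>#{#r*n#}. a div q)"
      using assms by (simp add: m_def div_le_mono)
  qed simp
  thus ?thesis by (simp add: m_def mult.commute)
qed

lemma R2_eq_ratio:
  fixes x :: real and i j n r :: nat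
  assumes ij: "i \<le> j" "j \<le> n" and x: "x < 1"
  defines "M \<equiv> r * n"
  shows "R2 i j n r x = fact (M+j+1) / (fact n ^ r * fact (j-i) * fact (M+i+1))
     * (\<Prod>l\<in>{n-i<..M+n+1}. real l - x) / (\<Prod>l\<in>{M+j-i<..M+j+1}. real l - x)"
proof -
  define P where "P a b = (\<Prod>l\<in>{a<..b}. real l - x)" for a b
  have P_nonzero: "P a b \<noteq> 0" for a b
    using x by (auto simp: P_def)
  have poch: "pochhammer (1 - x) k = P 0 k" for k
    using pochhammer_eq_prod_Ioc[of 0 "-x" k] by (simp add: P_def)
  have binom1: "ibinom (real M - x + real_of_int (int j - int i)) (int j - int i)
      = P M (M+j-i) / fact (j-i)"
  proof -
    have "int j - int i = int (j - i)"
      and "real M - x + real_of_int (int (j - i)) = real (M + (j - i)) + - x"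
      using ij by auto
    hence "ibinom (real M - x + real_of_int (int j - int i)) (int j - int i)
        = (real (M + (j - i)) + - x) gchoose (j - i)"
      by (simp only: ibinom_of_nat)
    also have "\<dots> = P M (M+j-i) / fact (j-i)"
      using gbinomial_eq_prod_Ioc[of "j-i" "M+(j-i)" "-x"] ij by (simp add: P_def)
    finally show ?thesis .
  qed
  have binom2: "ibinom (real ((r+1)*n) - x + 1) (int (M+i+1)) = P (n-i) (M+n+1) / fact (M+i+1)"
  proof -
    have "M+i+1 \<le> M+n+1" "M+n+1 - (M+i+1) = n-i" using ij by simp_all
    hence "(real (M+n+1) + - x) gchoose (M+i+1) = P (n-i) (M+n+1) / fact (M+i+1)"
      using gbinomial_eq_prod_Ioc[of "M+i+1" "M+n+1" "-x"]
      by (simp only: P_def diff_conv_add_uminus)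
    moreover have "real ((r+1)*n) - x + 1 = real (M+n+1) + - x" by (simp add: M_def)
    ultimately show ?thesis by (simp only: ibinom_of_nat)
  qed
  have "P 0 (M+j+1) = P 0 M * P M (M+j+1)"
    unfolding P_def by (rule prod_Ioc_split) simp_all
  also have "P M (M+j+1) = P M (M+j-i) * P (M+j-i) (M+j+1)"
    unfolding P_def by (rule prod_Ioc_split) (use ij in simp_all)
  finally have split: "P 0 (M+j+1) = P 0 M * P M (M+j-i) * P (M+j-i) (M+j+1)"
    by (simp only: mult.assoc)
  have "R2 i j n r x = fact (M+j+1) / (fact n ^ r * fact (j-i) * fact (M+i+1))
      * P (n-i) (M+n+1) / P (M+j-i) (M+j+1)"
    unfolding R2_def M_def[symmetric] poch binom1 binom2 split
    using P_nonzero[of 0 M] P_nonzero[of M "M+j-i"] P_nonzero[of "M+j-i" "M+j+1"]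
    by (simp add: field_simps del: fact_Suc)
  thus ?thesis by (simp only: P_def)
qed

lemma R2_eq_prod:
  fixes x :: real
  assumes ij: "i \<le> j" "j \<le> n" and "n \<le> r * n + j" and x: "x < 1"
  shows "R2 i j n r x = fact (r*n+j+1) / (fact n ^ r * fact (j-i) * fact (r*n+i+1))
     * (\<Prod>l\<in>{n-i<..r*n+j-i} \<union> {r*n+j+1<..r*n+n+1}. real l - x)"
proof -
  define M where "M = r * n"
  define K :: real where "K = fact (M+j+1) / (fact n ^ r * fact (j-i) * fact (M+i+1))"
  define P where "P a b = (\<Prod>l\<in>{a<..b}. real l - x)" for a b
  have "P (n-i) (M+n+1) = P (n-i) (M+j-i) * P (M+j-i) (M+n+1)"
    unfolding P_def using assms by (intro prod_Ioc_split) (simp_all add: M_def)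
  also have "P (M+j-i) (M+n+1) = P (M+j-i) (M+j+1) * P (M+j+1) (M+n+1)"
    unfolding P_def using assms by (intro prod_Ioc_split) (simp_all add: M_def)
  finally have split: "P (n-i) (M+n+1) = P (M+j-i) (M+j+1) * (P (n-i) (M+j-i) * P (M+j+1) (M+n+1))"
    by (simp only: ac_simps)
  have "P (M+j-i) (M+j+1) \<noteq> 0"
    using x by (auto simp: P_def)
  moreover have "R2 i j n r x = K * P (n-i) (M+n+1) / P (M+j-i) (M+j+1)"
    using R2_eq_ratio[OF ij x, of r] unfolding K_def P_def M_def .
  ultimately have "R2 i j n r x = K * (P (n-i) (M+j-i) * P (M+j+1) (M+n+1))"
    unfolding split by simp
  also have "P (n-i) (M+j-i) * P (M+j+1) (M+n+1) = (\<Prod>l\<in>{n-i<..M+j-i} \<union> {M+j+1<..M+n+1}. real l - x)"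
    unfolding P_def by (rule prod.union_disjoint[symmetric]) auto
  finally show ?thesis unfolding K_def M_def .
qed

(*
  For r = 0 and j < n the intervals (n-i, n+1] and (j-i, j+1] of R2_eq_ratio overlap only
  partially; the surviving denominators g <= j + 1 <= n give geometric factors.
*)
lemma R2_eq_prod_geometric:
  fixes x :: real
  assumes ij: "i \<le> j" "j \<le> n" and x: "x < 1"
  shows "R2 i j n 0 x = 1 / fact (i+1) * (\<Prod>l\<in>{n-i<..n+1}. real l - x)
     * (\<Prod>g\<in>{j-i<..j+1}. inverse (1 - x / real g))"
proof -
  define G where "G = {j-i<..j+1}"
  have fact_split: "(fact (j+1) :: real) = fact (j-i) * (\<Prod>g\<in>G. real g)"
    unfolding fact_eq_prod_Ioc G_def using ij by (intro prod_Ioc_split) simp_all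
  have "(\<Prod>g\<in>G. real g - x) \<noteq> 0"
    using x by (auto simp: G_def)
  moreover have "R2 i j n 0 x = fact (j+1) / (fact (j-i) * fact (i+1))
      * (\<Prod>l\<in>{n-i<..n+1}. real l - x) / (\<Prod>g\<in>G. real g - x)"
    using R2_eq_ratio[OF ij x, of 0] unfolding G_def by (simp only: mult_0 add_0 power_0 mult_1)
  ultimately have "R2 i j n 0 x = 1 / fact (i+1) * (\<Prod>l\<in>{n-i<..n+1}. real l - x)
      * ((\<Prod>g\<in>G. real g) / (\<Prod>g\<in>G. real g - x))"
    unfolding fact_split by (simp add: field_simps del: fact_Suc)
  also have "(\<Prod>g\<in>G. real g) / (\<Prod>g\<in>G. real g - x) = (\<Prod>g\<in>G. inverse (1 - x / real g))"
    unfolding prod_dividef[symmetric] using x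
    by (intro prod.cong refl) (auto simp: G_def field_simps)
  finally show ?thesis unfolding G_def .
qed

lemma R2_coefficient_dvd:
  assumes "i \<le> j" "j \<le> n" "n \<le> r * n + j"
  shows "fact n ^ r * fact (j-i) * fact (r*n+i+1) dvd
           fact (r*n+j+1) * (\<Prod>l\<in>{n-i<..r*n+j-i} \<union> {r*n+j+1<..r*n+n+1}. gcd l (dlcm n))"
proof -
  define M where "M = r * n"
  have "(\<Prod>b\<in>#replicate_mset r n + {#j-i, M+i+1#}. fact b) dvd
          (\<Prod>a\<in>#{#M+j+1#}. fact a) * (\<Prod>l\<in>{n-i<..M+j-i} \<union> {M+j+1<..M+n+1}. gcd l (dlcm n))"
  proof (rule prod_mset_fact_dvd_dlcm)
    fix q :: nat assume "0 < q" "q \<le> n"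
    have "card {l \<in> {n-i<..M+j-i} \<union> {M+j+1<..M+n+1}. q dvd l}
        = card {l \<in> {n-i<..M+j-i}. q dvd l} + card {l \<in> {M+j+1<..M+n+1}. q dvd l}"
      by (subst card_Un_disjoint[symmetric]) (auto intro: arg_cong[where f = card])
    moreover have "M+i+1 + (n-i) = M+n+1" "M + (j-i) = M+j-i" using assms by auto
    hence "(M+i+1) div q + (n-i) div q \<le> (M+n+1) div q" "M div q + (j-i) div q \<le> (M+j-i) div q"
      using div_add_div_le[of "M+i+1" q "n-i"] div_add_div_le[of M q "j-i"] by simp_all
    moreover have "(n-i) div q \<le> (M+j-i) div q" "(M+j+1) div q \<le> (M+n+1) div q"
      using assms by (simp_all add: div_le_mono M_def)
    ultimately show "(\<Sum>b\<in>#replicate_mset r n + {#j-i, M+i+1#}. b div q)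
        \<le> (\<Sum>a\<in>#{#M+j+1#}. a div q) + card {l \<in> {n-i<..M+j-i} \<union> {M+j+1<..M+n+1}. q dvd l}"
      unfolding card_multiples_Ioc[OF \<open>0 < q\<close>] using mult_div_le_mult_div[of r n q]
      by (simp add: M_def) arith
  next
    fix q :: nat assume "n < q"
    thus "(\<Sum>b\<in>#replicate_mset r n + {#j-i, M+i+1#}. b div q) \<le> (\<Sum>a\<in>#{#M+j+1#}. a div q)"
      using assms by (simp add: div_le_mono)
  qed simp
  thus ?thesis by (simp add: M_def mult_ac)
qed

lemma R2_geometric_coefficient_dvd:
  assumes "i \<le> j" "j < n"
  shows "fact (i+1) dvd (\<Prod>l\<in>{n-i<..n+1}. gcd l (dlcm n))"
proof -
  have "(\<Prod>b\<in>#{#i+1#}. fact b) dvd (\<Prod>a\<in>#{#}. fact a) * (\<Prod>l\<in>{n-i<..n+1}. gcd l (dlcm n))"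
  proof (rule prod_mset_fact_dvd_dlcm)
    fix q :: nat assume "0 < q" "q \<le> n"
    have "(i+1) div q + (n-i) div q \<le> (n+1) div q"
      using div_add_div_le[of "i+1" q "n-i"] assms by simp
    thus "(\<Sum>b\<in>#{#i+1#}. b div q) \<le> (\<Sum>a\<in>#{#}. a div q) + card {l \<in> {n-i<..n+1}. q dvd l}"
      unfolding card_multiples_Ioc[OF \<open>0 < q\<close>] by simp
  next
    fix q :: nat assume "n < q"
    thus "(\<Sum>b\<in>#{#i+1#}. b div q) \<le> (\<Sum>a\<in>#{#}. a div q)"
      using assms by simp
  qed simp
  thus ?thesis by simp
qed

lemma R1_scaled_integral_expansion:
  assumes "i \<le> n" "j \<le> n"
  obtains F where "R1 i j n r has_fps_expansion F" "scaled_integral (dlcm n) F"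
proof (cases "n \<le> r * n + j")
  case True
  define K :: real where "K = fact (r*n) / (fact n ^ r * fact (r*n+j-n))"
  define L where "L = {n+i-j<..r*n+i}"
  define F where "F = fps_const K * (\<Prod>l\<in>L. fps_const (real l) + fps_const 1 * fps_X)"
  have "R1 i j n r = (\<lambda>x. K * (\<Prod>l\<in>L. real l + 1 * x))"
    using R1_eq_prod[OF assms True] by (simp add: K_def L_def)
  hence "R1 i j n r has_fps_expansion F"
    unfolding F_def by (simp only: has_fps_expansion_linear_prod)
  moreover have "scaled_integral (dlcm n) F"
    unfolding F_def
  proof (rule scaled_integral_linear_prod)
    show "K * (\<Prod>l\<in>L. real (gcd l (dlcm n))) \<in> \<int>"
      using of_nat_div_mult_Ints[OF R1_coefficient_dvd[OF assms True]]
      by (simp add: K_def L_def of_nat_prod)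
  qed (simp_all add: L_def)
  ultimately show ?thesis by (rule that)
next
  case False
  thus ?thesis using that[of 0] R1_eq_0 scaled_integral_const[of 0] by simp
qed

lemma R2_scaled_integral_expansion_generic:
  assumes "i \<le> j" "j \<le> n" "n \<le> r * n + j"
  obtains F where "R2 i j n r has_fps_expansion F" "scaled_integral (dlcm n) F"
proof -
  define K :: real where "K = fact (r*n+j+1) / (fact n ^ r * fact (j-i) * fact (r*n+i+1))"
  define L where "L = {n-i<..r*n+j-i} \<union> {r*n+j+1<..r*n+n+1}"
  define F where "F = fps_const K * (\<Prod>l\<in>L. fps_const (real l) + fps_const (-1) * fps_X)"
  have "eventually (\<lambda>x. K * (\<Prod>l\<in>L. real l + (-1) * x) = R2 i j n r x) (nhds 0)"
    using eventually_nhds_0_less_1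
    by eventually_elim (simp add: R2_eq_prod[OF assms] K_def L_def)
  moreover have "(\<lambda>x. K * (\<Prod>l\<in>L. real l + (-1) * x)) has_fps_expansion F"
    unfolding F_def by (rule has_fps_expansion_linear_prod)
  ultimately have "R2 i j n r has_fps_expansion F"
    by (simp add: has_fps_expansion_cong)
  moreover have "scaled_integral (dlcm n) F"
    unfolding F_def
  proof (rule scaled_integral_linear_prod)
    show "K * (\<Prod>l\<in>L. real (gcd l (dlcm n))) \<in> \<int>"
      using of_nat_div_mult_Ints[OF R2_coefficient_dvd[OF assms]]
      by (simp add: K_def L_def of_nat_prod del: fact_Suc)
  qed (simp_all add: L_def)
  ultimately show ?thesis by (rule that)
qed

lemma R2_scaled_integral_expansion_degenerate:
  assumes "i \<le> j" "j < n"
  obtains F where "R2 i j n 0 has_fps_expansion F" "scaled_integral (dlcm n) F"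
proof -
  define K :: real where "K = 1 / fact (i+1)"
  define L where "L = {n-i<..n+1}"
  define G where "G = {j-i<..j+1}"
  define P where "P = fps_const K * (\<Prod>l\<in>L. fps_const (real l) + fps_const (-1) * fps_X)"
  define Q where "Q = (\<Prod>g\<in>G. Abs_fps (\<lambda>k. inverse (real g) ^ k))"
  have "eventually (\<lambda>x. K * (\<Prod>l\<in>L. real l + (-1) * x) * (\<Prod>g\<in>G. inverse (1 - x / real g))
      = R2 i j n 0 x) (nhds 0)"
    using eventually_nhds_0_less_1
    by eventually_elim (use assms in \<open>simp add: R2_eq_prod_geometric K_def L_def G_def\<close>)
  moreover have "(\<lambda>x. K * (\<Prod>l\<in>L. real l + (-1) * x) * (\<Prod>g\<in>G. inverse (1 - x / real g)))
      has_fps_expansion P * Q"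
    unfolding P_def Q_def
    by (intro has_fps_expansion_mult has_fps_expansion_linear_prod has_fps_expansion_prod
        has_fps_expansion_geometric)
  ultimately have "R2 i j n 0 has_fps_expansion P * Q"
    by (simp add: has_fps_expansion_cong)
  moreover have "scaled_integral (dlcm n) (P * Q)"
  proof (rule scaled_integral_mult)
    show "scaled_integral (dlcm n) P"
      unfolding P_def
    proof (rule scaled_integral_linear_prod)
      have "fact (i+1) dvd 1 * (\<Prod>l\<in>L. gcd l (dlcm n))"
        using R2_geometric_coefficient_dvd[OF assms] by (simp add: L_def)
      from of_nat_div_mult_Ints[OF this] show "K * (\<Prod>l\<in>L. real (gcd l (dlcm n))) \<in> \<int>"
        by (simp add: K_def of_nat_prod del: fact_Suc)
    qed (simp_all add: L_def)
    show "scaled_integral (dlcm n) Q"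
      unfolding Q_def using assms
      by (intro scaled_integral_prod scaled_integral_geometric dvd_dlcm) (auto simp: G_def)
  qed
  ultimately show ?thesis by (rule that)
qed

lemma R2_scaled_integral_expansion:
  assumes "i \<le> j" "j \<le> n"
  obtains F where "R2 i j n r has_fps_expansion F" "scaled_integral (dlcm n) F"
proof (cases "n \<le> r * n + j")
  case True
  thus ?thesis using R2_scaled_integral_expansion_generic assms that by blast
next
  case False
  hence "r = 0" "j < n" by (cases r; simp)+
  thus ?thesis using R2_scaled_integral_expansion_degenerate assms that by blast
qed

theorem mainTheorem16:
  fixes i j n r H :: nat
  shows "(i \<le> n \<and> j \<le> n \<longrightarrow>
            real (dlcm n) ^ H * ((deriv ^^ H) (R1 i j n r) 0 / fact H) \<in> \<int>)
       \<and> (i \<le> j \<and> j \<le> n \<longrightarrow>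
            real (dlcm n) ^ H * ((deriv ^^ H) (R2 i j n r) 0 / fact H) \<in> \<int>)"
proof (intro conjI impI; elim conjE)
  assume "i \<le> n" "j \<le> n"
  then obtain F where "R1 i j n r has_fps_expansion F" "scaled_integral (dlcm n) F"
    by (rule R1_scaled_integral_expansion)
  thus "real (dlcm n) ^ H * ((deriv ^^ H) (R1 i j n r) 0 / fact H) \<in> \<int>"
    by (rule scaled_integral_taylor_coeff)
next
  assume "i \<le> j" "j \<le> n"
  then obtain F where "R2 i j n r has_fps_expansion F" "scaled_integral (dlcm n) F"
    by (rule R2_scaled_integral_expansion)
  thus "real (dlcm n) ^ H * ((deriv ^^ H) (R2 i j n r) 0 / fact H) \<in> \<int>"
    by (rule scaled_integral_taylor_coeff)
qed

end
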